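(* Each of the following forms graphs is geodesic-transitive: the bilinear forms graph $\mathrm{Bil}(m,k,q)$ ($m\le k$), the alternating forms graph $\mathrm{Alt}(k,q)$, and the Hermitian forms graph $\mathrm{Her}(k,r)$.
   Context: $\mathrm{Bil}(m,k,q)$: vertices are the $m\times k$ matrices over $\mathbb{F}_q$, $X,Y$ adjacent iff $\mathrm{rk}(X-Y)=1$ (equivalently, bilinear maps $\mathbb{F}_q^m\times\mathbb{F}_q^k\to\mathbb{F}_q$). $\mathrm{Alt}(k,q)$: vertices are the skew-symmetric $k\times k$ matrices over $\mathbb{F}_q$ with zero diagonal (alternating forms on $\mathbb{F}_q^k$), $X,Y$ adjacent iff $\mathrm{rk}(X-Y)=2$. $\mathrm{Her}(k,r)$: with $q=r^2$ and $\sigma$ the field automorphism of $\mathbb{F}_q$ of order $2$, vertices are the $k\times k$ Hermitian matrices $M$ over $\mathbb{F}_q$ (i.e. $M^{\mathsf T}=M^{\sigma}$), $X,Y$ adjacent iff $\mathrm{rk}(X-Y)=1$. A geodesic of length $\ell$ is a vertex sequence $(v_0,\dots,v_\ell)$ with consecutive vertices adjacent and $d(v_0,v_\ell)=\ell$; a graph is geodesic-transitive if its automorphism group is transitive on geodesics of each length. *)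

theory Defs
  imports "HOL-Analysis.Analysis"
begin

definition is_walk :: "'v set \<Rightarrow> ('v \<Rightarrow> 'v \<Rightarrow> bool) \<Rightarrow> 'v list \<Rightarrow> bool" where
  "is_walk V adj p \<longleftrightarrow> p \<noteq> [] \<and> set p \<subseteq> V \<and>
     (\<forall>i. Suc i < length p \<longrightarrow> adj (p ! i) (p ! Suc i))"

definition graph_dist :: "'v set \<Rightarrow> ('v \<Rightarrow> 'v \<Rightarrow> bool) \<Rightarrow> 'v \<Rightarrow> 'v \<Rightarrow> nat" where
  "graph_dist V adj u v =
     (LEAST n. \<exists>p. is_walk V adj p \<and> hd p = u \<and> last p = v \<and> length p = Suc n)"

definition is_geodesic :: "'v set \<Rightarrow> ('v \<Rightarrow> 'v \<Rightarrow> bool) \<Rightarrow> nat \<Rightarrow> 'v list \<Rightarrow> bool" where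
  "is_geodesic V adj l p \<longleftrightarrow> is_walk V adj p \<and> length p = Suc l \<and>
     graph_dist V adj (hd p) (last p) = l"

definition graph_automorphism :: "'v set \<Rightarrow> ('v \<Rightarrow> 'v \<Rightarrow> bool) \<Rightarrow> ('v \<Rightarrow> 'v) \<Rightarrow> bool" where
  "graph_automorphism V adj f \<longleftrightarrow> bij_betw f V V \<and>
     (\<forall>x\<in>V. \<forall>y\<in>V. adj (f x) (f y) \<longleftrightarrow> adj x y)"

definition geodesic_transitive :: "'v set \<Rightarrow> ('v \<Rightarrow> 'v \<Rightarrow> bool) \<Rightarrow> bool" where
  "geodesic_transitive V adj \<longleftrightarrow>
     (\<forall>l p p'. is_geodesic V adj l p \<and> is_geodesic V adj l p' \<longrightarrow>
        (\<exists>f. graph_automorphism V adj f \<and> map f p = p'))"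

text \<open>Bilinear forms graph Bil(m,k,q): all m x k matrices (rows indexed by 'm, columns by 'k).\<close>
definition bil_adj :: "'a::field^'k^'m \<Rightarrow> 'a^'k^'m \<Rightarrow> bool" where
  "bil_adj X Y \<longleftrightarrow> rank (X - Y) = 1"

definition alt_verts :: "('a::field^'k^'k) set" where
  "alt_verts = {X. transpose X = - X \<and> (\<forall>i. X $ i $ i = 0)}"

definition alt_adj :: "'a::field^'k^'k \<Rightarrow> 'a^'k^'k \<Rightarrow> bool" where
  "alt_adj X Y \<longleftrightarrow> rank (X - Y) = 2"

text \<open>Hermitian forms graph Her(k,r) w.r.t. the involutory field automorphism sigma:
  M^T = M^sigma.\<close>
definition her_verts :: "('a \<Rightarrow> 'a) \<Rightarrow> ('a::field^'k^'k) set" where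
  "her_verts \<sigma> = {M. \<forall>i j. M $ j $ i = \<sigma> (M $ i $ j)}"

definition her_adj :: "'a::field^'k^'k \<Rightarrow> 'a^'k^'k \<Rightarrow> bool" where
  "her_adj X Y \<longleftrightarrow> rank (X - Y) = 1"

definition field_automorphism :: "('a::field \<Rightarrow> 'a) \<Rightarrow> bool" where
  "field_automorphism \<sigma> \<longleftrightarrow> bij \<sigma> \<and> (\<forall>x y. \<sigma> (x + y) = \<sigma> x + \<sigma> y) \<and>
     (\<forall>x y. \<sigma> (x * y) = \<sigma> x * \<sigma> y) \<and> \<sigma> 1 = 1"

end

(*
  In each forms graph the vertices form an additive group of matrices and X, Y are adjacent iff
  rank (X - Y) = s, with s = 2 for alternating forms and s = 1 otherwise. A nonzero vertex X can
  always be lowered to rank (rank X - s) by subtracting a vertex of rank s (Wedderburn's rank-one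
  reduction, applied twice for alternating forms), so the distance is rank (X - Y) / s, and the
  steps d_j of a geodesic of length l are vertices of rank s whose sum has rank s * l. Writing
  d_j = u_j v_j^T, resp. u_j v_j^T - v_j u_j^T, resp. conj(w_j) w_j^T, the rank condition forces
  the vectors u_j, v_j (resp. w_j) to be linearly independent, so an invertible matrix maps those of
  one geodesic to those of another. The corresponding congruence X |-> P X Q^T, P X P^T or
  conj(P) X P^T preserves rank and the vertex set, and composed with translations it carries one
  geodesic to the other. In the Hermitian case the reduction needs every nonzero element of the
  fixed field of the involution to be a norm, which holds for finite fields by counting.
*)
theory Submission
  imports Defs
begin

section \<open>Graphs whose distance is a rank\<close>

lemma is_walk_Cons_iff:
  assumes "q \<noteq> []"
  shows "is_walk V adj (a # q) \<longleftrightarrow> a \<in> V \<and> adj a (hd q) \<and> is_walk V adj q"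
  using assms unfolding is_walk_def by (cases q) (auto simp: All_less_Suc2)

locale rank_distance_graph =
  fixes V :: "'v::ab_group_add set" and \<rho> :: "'v \<Rightarrow> nat" and s :: nat
  assumes zero_mem: "0 \<in> V"
    and diff_mem: "X \<in> V \<Longrightarrow> Y \<in> V \<Longrightarrow> X - Y \<in> V"
    and rho_zero: "\<rho> 0 = 0"
    and rho_uminus: "\<rho> (- X) = \<rho> X"
    and rho_add_le: "\<rho> (X + Y) \<le> \<rho> X + \<rho> Y"
    and step_pos: "0 < s"
    and reduction: "X \<in> V \<Longrightarrow> X \<noteq> 0 \<Longrightarrow> \<exists>D\<in>V. \<rho> D \<le> s \<and> \<rho> (X - D) + s \<le> \<rho> X"
begin

abbreviation adj :: "'v \<Rightarrow> 'v \<Rightarrow> bool" where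
  "adj X Y \<equiv> \<rho> (X - Y) = s"

lemma add_mem: "X \<in> V \<Longrightarrow> Y \<in> V \<Longrightarrow> X + Y \<in> V"
  using diff_mem[of X "0 - Y"] diff_mem[OF zero_mem, of Y] by simp

lemma rho_diff_commute: "\<rho> (X - Y) = \<rho> (Y - X)"
  using rho_uminus[of "X - Y"] by simp

lemma short_walk_exists:
  assumes "X \<in> V" "Y \<in> V"
  shows "\<exists>p. is_walk V adj p \<and> hd p = X \<and> last p = Y \<and> s * (length p - 1) \<le> \<rho> (Y - X)"
  using assms
proof (induction "\<rho> (Y - X)" arbitrary: X rule: less_induct)
  case less
  show ?case
  proof (cases "Y - X = 0")
    case True
    then show ?thesis
      using less.prems by (intro exI[of _ "[X]"]) (simp add: is_walk_def)
  next
    case False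
    then obtain D where D: "D \<in> V" "\<rho> D \<le> s" "\<rho> (Y - X - D) + s \<le> \<rho> (Y - X)"
      using reduction diff_mem less.prems by blast
    have "\<rho> (Y - X) \<le> \<rho> (Y - X - D) + \<rho> D"
      using rho_add_le[of "Y - X - D" D] by simp
    then have step: "\<rho> D = s"
      using D by linarith
    have XD: "X + D \<in> V"
      using add_mem less.prems D by blast
    have "\<rho> (Y - (X + D)) < \<rho> (Y - X)"
      using D(3) step_pos by (simp add: diff_diff_eq)
    then obtain q where q: "is_walk V adj q" "hd q = X + D" "last q = Y"
      "s * (length q - 1) \<le> \<rho> (Y - (X + D))"
      using less.hyps XD less.prems(2) by blast
    have "q \<noteq> []"
      using q(1) by (simp add: is_walk_def)
    moreover have "adj X (hd q)"
      using q(2) step rho_diff_commute[of X "X + D"] by simp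
    ultimately have "is_walk V adj (X # q)"
      using q(1) less.prems(1) by (simp add: is_walk_Cons_iff)
    moreover have "s * (length (X # q) - 1) \<le> \<rho> (Y - X)"
      using q(4) D(3) \<open>q \<noteq> []\<close> by (cases q) (simp_all add: diff_diff_eq)
    ultimately show ?thesis
      using q \<open>q \<noteq> []\<close> by (intro exI[of _ "X # q"]) simp
  qed
qed

lemma rho_walk_le:
  assumes "is_walk V adj p"
  shows "\<rho> (last p - hd p) \<le> s * (length p - 1)"
  using assms
proof (induction p)
  case Nil
  then show ?case by (simp add: is_walk_def)
next
  case (Cons X q)
  show ?case
  proof (cases "q = []")
    case True
    then show ?thesis by (simp add: rho_zero)
  next
    case False
    then have "adj X (hd q)" "is_walk V adj q"
      using Cons.prems by (simp_all add: is_walk_Cons_iff)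
    then have "\<rho> (last q - X) \<le> \<rho> (last q - hd q) + s"
      using rho_add_le[of "last q - hd q" "hd q - X"] rho_diff_commute[of X] by simp
    also have "\<dots> \<le> s * (length (X # q) - 1)"
      using Cons.IH \<open>is_walk V adj q\<close> False by (cases q) auto
    finally show ?thesis
      using False by simp
  qed
qed

lemma graph_dist_eq:
  assumes "X \<in> V" "Y \<in> V"
  shows "s * graph_dist V adj X Y = \<rho> (Y - X)"
proof -
  let ?walk = "\<lambda>n. \<exists>p. is_walk V adj p \<and> hd p = X \<and> last p = Y \<and> length p = Suc n"
  obtain p where p: "is_walk V adj p" "hd p = X" "last p = Y" "s * (length p - 1) \<le> \<rho> (Y - X)"
    using short_walk_exists[OF assms] by blast
  then have "?walk (length p - 1)"
    by (intro exI[of _ p]) (auto simp: is_walk_def)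
  then have le: "graph_dist V adj X Y \<le> length p - 1" and "?walk (graph_dist V adj X Y)"
    unfolding graph_dist_def by (auto intro: Least_le LeastI)
  then obtain q where "is_walk V adj q" "hd q = X" "last q = Y" "length q = Suc (graph_dist V adj X Y)"
    by blast
  then have "\<rho> (Y - X) \<le> s * graph_dist V adj X Y"
    using rho_walk_le[of q] by simp
  moreover have "s * graph_dist V adj X Y \<le> \<rho> (Y - X)"
    using mult_le_mono2[OF le, of s] p(4) by linarith
  ultimately show ?thesis
    by linarith
qed

lemma rho_geodesic:
  assumes "is_geodesic V adj l p"
  shows "\<rho> (last p - hd p) = s * l"
  using assms graph_dist_eq[of "hd p" "last p"]
  by (auto simp: is_geodesic_def is_walk_def subset_iff)

lemma geodesic_steps:
  assumes "is_geodesic V adj l p"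
  shows "\<forall>j<l. p ! Suc j - p ! j \<in> V \<and> \<rho> (p ! Suc j - p ! j) = s"
    and "\<rho> (\<Sum>j<l. p ! Suc j - p ! j) = s * l"
proof -
  have p: "is_walk V adj p" "length p = Suc l"
    using assms by (auto simp: is_geodesic_def)
  show "\<forall>j<l. p ! Suc j - p ! j \<in> V \<and> \<rho> (p ! Suc j - p ! j) = s"
  proof (intro allI impI conjI)
    fix j assume "j < l"
    then have "p ! j \<in> V" "p ! Suc j \<in> V" "adj (p ! j) (p ! Suc j)"
      using p nth_mem[of j p] nth_mem[of "Suc j" p] unfolding is_walk_def by auto
    then show "p ! Suc j - p ! j \<in> V" "\<rho> (p ! Suc j - p ! j) = s"
      using diff_mem rho_diff_commute by auto
  qed
  have "(\<Sum>j<l. p ! Suc j - p ! j) = last p - hd p"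
    using p(2) length_0_conv[of p] by (simp add: sum_lessThan_telescope hd_conv_nth last_conv_nth)
  then show "\<rho> (\<Sum>j<l. p ! Suc j - p ! j) = s * l"
    using rho_geodesic[OF assms] by simp
qed

lemma automorphism_of_isometry:
  assumes L: "Modules.additive L" "bij_betw L V V" "\<forall>X\<in>V. \<rho> (L X) = \<rho> X"
    and "A \<in> V" "B \<in> V"
  shows "graph_automorphism V adj (\<lambda>X. L (X - A) + B)"
proof -
  have "bij_betw (\<lambda>X. X - A) V V"
    by (rule bij_betw_byWitness[where f' = "\<lambda>X. X + A"]) (auto intro: add_mem diff_mem assms)
  moreover have "bij_betw (\<lambda>X. X + B) V V"
    by (rule bij_betw_byWitness[where f' = "\<lambda>X. X - B"]) (auto intro: add_mem diff_mem assms)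
  ultimately have "bij_betw (\<lambda>X. L (X - A) + B) V V"
    using bij_betw_trans[OF bij_betw_trans[OF _ L(2)]] by (simp add: comp_def)
  moreover have "L (X - A) + B - (L (Y - A) + B) = L (X - Y)" for X Y
    using additive.diff[OF L(1)] by simp
  ultimately show ?thesis
    using L(3) diff_mem by (simp add: graph_automorphism_def)
qed

theorem geodesic_transitiveI:
  assumes extend: "\<And>l d d'. \<forall>j<l. d j \<in> V \<and> \<rho> (d j) = s \<Longrightarrow> \<forall>j<l. d' j \<in> V \<and> \<rho> (d' j) = s \<Longrightarrow>
      \<rho> (\<Sum>j<l. d j) = s * l \<Longrightarrow> \<rho> (\<Sum>j<l. d' j) = s * l \<Longrightarrow>
      \<exists>L. Modules.additive L \<and> bij_betw L V V \<and> (\<forall>X\<in>V. \<rho> (L X) = \<rho> X) \<and> (\<forall>j<l. L (d j) = d' j)"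
  shows "geodesic_transitive V adj"
  unfolding geodesic_transitive_def
proof (intro allI impI, elim conjE)
  fix l p p' assume p: "is_geodesic V adj l p" and p': "is_geodesic V adj l p'"
  define d where "d j = p ! Suc j - p ! j" for j
  define d' where "d' j = p' ! Suc j - p' ! j" for j
  obtain L where L: "Modules.additive L" "bij_betw L V V" "\<forall>X\<in>V. \<rho> (L X) = \<rho> X"
    and Ld: "\<forall>j<l. L (d j) = d' j"
    using extend[of l d d'] geodesic_steps[OF p] geodesic_steps[OF p'] unfolding d_def d'_def by blast
  have len: "length p = Suc l" "length p' = Suc l"
    using p p' by (auto simp: is_geodesic_def)
  have hd: "p ! 0 \<in> V" "p' ! 0 \<in> V"
    using p p' by (auto simp: is_geodesic_def is_walk_def subset_iff)
  have "L (p ! i - p ! 0) + p' ! 0 = p' ! i" if "i \<le> l" for i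
  proof -
    have "L (p ! i - p ! 0) = (\<Sum>j<i. L (d j))"
      by (simp add: d_def sum_lessThan_telescope[symmetric] additive.sum[OF L(1)])
    also have "\<dots> = p' ! i - p' ! 0"
      using Ld that by (simp add: d'_def sum_lessThan_telescope[symmetric])
    finally show ?thesis
      by simp
  qed
  then have "map (\<lambda>X. L (X - p ! 0) + p' ! 0) p = p'"
    using len by (intro nth_equalityI) auto
  then show "\<exists>f. graph_automorphism V adj f \<and> map f p = p'"
    using automorphism_of_isometry[OF L hd] by blast
qed

end

section \<open>Rank of matrices over a field\<close>

lemma rank_eq_dim_rows: "rank X = vec.dim (range (\<lambda>i. X $ i))"
proof -
  have "rows X = range (\<lambda>i. X $ i)"
    by (auto simp: rows_def row_def vec_eq_iff)
  then show ?thesis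
    by (simp add: row_rank_def_gen)
qed

lemma rank_le_dim:
  assumes "\<And>i. X $ i \<in> vec.span S"
  shows "rank X \<le> vec.dim S"
proof -
  have "rank X \<le> vec.dim (vec.span S)"
    unfolding rank_eq_dim_rows using assms by (intro vec.dim_subset) auto
  then show ?thesis
    by simp
qed

lemma rank_eq_0_gen: "rank X = 0 \<longleftrightarrow> X = 0"
  by (auto simp: rank_eq_dim_rows image_subset_iff vec_eq_iff)

lemma rank_uminus: "rank (- X) = rank X"
proof -
  have "rank (- Y) \<le> rank Y" for Y :: "'a::field^'n^'m"
    unfolding rank_eq_dim_rows[of Y]
    by (rule rank_le_dim) (simp add: vec.span_neg vec.span_base)
  from this[of X] this[of "- X"] show ?thesis
    by simp
qed

lemma rank_add_le: "rank (X + Y) \<le> rank X + rank Y"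
proof -
  obtain A where A: "vec.independent A" "range (\<lambda>i. X $ i) \<subseteq> vec.span A" "card A = rank X"
    using vec.basis_exists[of "range (\<lambda>i. X $ i)"] by (metis rank_eq_dim_rows)
  obtain B where B: "vec.independent B" "range (\<lambda>i. Y $ i) \<subseteq> vec.span B" "card B = rank Y"
    using vec.basis_exists[of "range (\<lambda>i. Y $ i)"] by (metis rank_eq_dim_rows)
  have "rank (X + Y) \<le> vec.dim (A \<union> B)"
  proof (rule rank_le_dim)
    fix i
    have "X $ i \<in> vec.span (A \<union> B)" "Y $ i \<in> vec.span (A \<union> B)"
      using A(2) B(2) vec.span_mono[of A "A \<union> B"] vec.span_mono[of B "A \<union> B"] by auto
    then show "(X + Y) $ i \<in> vec.span (A \<union> B)"
      by (simp add: vec.span_add)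
  qed
  also have "\<dots> \<le> card (A \<union> B)"
    using A(1) B(1) by (intro vec.dim_le_card) (auto intro: vec.span_base vec.finiteI_independent)
  also have "\<dots> \<le> rank X + rank Y"
    using card_Un_le A(3) B(3) by metis
  finally show ?thesis .
qed

lemma rank_sum_le: "rank (\<Sum>j\<in>J. f j) \<le> (\<Sum>j\<in>J. rank (f j))"
  by (induction J rule: infinite_finite_induct)
    (auto simp: rank_eq_0_gen intro: order.trans[OF rank_add_le])

lemma rank_mul_le_right_gen: "rank (A ** B) \<le> rank B"
  unfolding rank_eq_dim_rows[of B]
proof (rule rank_le_dim)
  fix i
  have "(A ** B) $ i = (\<Sum>k\<in>UNIV. A $ i $ k *s B $ k)"
    by (simp add: vec_eq_iff matrix_matrix_mult_def)
  then show "(A ** B) $ i \<in> vec.span (range (\<lambda>k. B $ k))"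
    by (simp add: vec.span_sum vec.span_scale vec.span_base)
qed

lemma rank_mul_le_left_gen:
  fixes A :: "'a::field^'n^'m" and B :: "'a^'p^'n"
  shows "rank (A ** B) \<le> rank A"
proof -
  have "range (\<lambda>i. (A ** B) $ i) = (*v) (transpose B) ` range (\<lambda>i. A $ i)"
    by (auto simp: vec_eq_iff matrix_matrix_mult_def matrix_vector_mult_def transpose_def mult.commute)
  moreover have "vec.dim ((*v) (transpose B) ` S) \<le> vec.dim S" for S :: "('a^'n) set"
    by (rule vec.dim_image_le[OF matrix_vector_mul_linear_gen])
  ultimately show ?thesis
    unfolding rank_eq_dim_rows by metis
qed

lemma rank_invertible_mult:
  assumes "invertible A" "invertible B"
  shows "rank (A ** X ** B) = rank X"
proof -
  obtain A' B' where "A' ** A = mat 1" "B ** B' = mat 1"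
    using assms by (auto simp: invertible_def)
  then have "X = A' ** (A ** X ** B) ** B'"
    by (metis matrix_mul_assoc matrix_mul_lid matrix_mul_rid)
  then have "rank X \<le> rank (A ** X ** B)"
    by (metis order.trans rank_mul_le_left_gen rank_mul_le_right_gen)
  then show ?thesis
    by (metis antisym order.trans rank_mul_le_left_gen rank_mul_le_right_gen)
qed

lemma matrix_add_rdistrib: "(A + B) ** C = A ** C + B ** C"
  by (simp add: matrix_matrix_mult_def vec_eq_iff distrib_right sum.distrib)

lemma additive_congruence: "Modules.additive (\<lambda>X. A ** X ** B)"
  by unfold_locales (simp add: matrix_add_ldistrib matrix_add_rdistrib)

lemma congruence_isometry:
  fixes A :: "'a::field^'m^'m" and B :: "'a^'n^'n"
  assumes inv: "A' ** A = mat 1" "B ** B' = mat 1"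
    and closed: "\<And>X. X \<in> V \<Longrightarrow> A ** X ** B \<in> V" "\<And>X. X \<in> V \<Longrightarrow> A' ** X ** B' \<in> V"
    and "\<forall>j<l. A ** d j ** B = d' j"
  shows "\<exists>L. Modules.additive L \<and> bij_betw L V V \<and> (\<forall>X\<in>V. rank (L X) = rank X) \<and> (\<forall>j<l. L (d j) = d' j)"
proof (intro exI conjI)
  have inv': "A ** A' = mat 1" "B' ** B = mat 1"
    using inv matrix_left_right_inverse by blast+
  have "A' ** (A ** X ** B) ** B' = X" "A ** (A' ** X ** B') ** B = X" for X
    by (metis inv inv' matrix_mul_assoc matrix_mul_lid matrix_mul_rid)+
  then show "bij_betw (\<lambda>X. A ** X ** B) V V"
    by (intro bij_betw_byWitness[where f' = "\<lambda>X. A' ** X ** B'"]) (auto intro: closed)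
  have "invertible A" "invertible B"
    using inv inv' by (auto simp: invertible_def)
  then show "\<forall>X\<in>V. rank (A ** X ** B) = rank X"
    by (simp add: rank_invertible_mult)
qed (use assms additive_congruence in auto)

definition dotp :: "'a::field^'n \<Rightarrow> 'a^'n \<Rightarrow> 'a" where
  "dotp y z = (\<Sum>i\<in>UNIV. y $ i * z $ i)"

lemma dotp_zero_left: "dotp 0 z = 0"
  and dotp_add_left: "dotp (x + y) z = dotp x z + dotp y z"
  and dotp_diff_left: "dotp (x - y) z = dotp x z - dotp y z"
  and dotp_add_right: "dotp y (z + w) = dotp y z + dotp y w"
  and dotp_scale_left: "dotp (c *s y) z = c * dotp y z"
  and dotp_scale_right: "dotp y (c *s z) = c * dotp y z"
  and dotp_axis_right: "dotp y (axis j 1) = y $ j"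
  by (simp_all add: dotp_def algebra_simps sum.distrib sum_subtractf sum_distrib_left axis_def
      if_distrib[of "\<lambda>t. _ * t"] cong: if_cong)

lemma matrix_vector_mult_component: "(X *v z) $ i = dotp (X $ i) z"
  by (simp add: matrix_vector_mult_def dotp_def)

lemma dim_inter_kernel_less:
  assumes "vec.subspace W" "y \<in> W" "dotp y z \<noteq> 0"
  shows "vec.dim (W \<inter> {x. dotp x z = 0}) < vec.dim W"
proof (rule vec.dim_psubset)
  let ?K = "{x. dotp x z = 0}"
  have "vec.subspace ?K"
    unfolding vec.subspace_def by (simp add: dotp_zero_left dotp_add_left dotp_scale_left)
  then have span_WK: "vec.span (W \<inter> ?K) = W \<inter> ?K"
    using assms(1) by (simp add: vec.subspace_inter)
  have span_W: "vec.span W = W"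
    using assms(1) by simp
  show "vec.span (W \<inter> ?K) \<subset> vec.span W"
    unfolding span_WK span_W using assms(2,3) by blast
qed

definition outer :: "'a::field^'m \<Rightarrow> 'a^'k \<Rightarrow> 'a^'k^'m" where
  "outer u v = (\<chi> i j. u $ i * v $ j)"

lemma outer_component: "outer u v $ i = u $ i *s v"
  by (simp add: outer_def vec_eq_iff)

text \<open>Wedderburn's rank-one reduction: the rows of the difference stay in the row space of
  \<open>X\<close> but are all orthogonal to \<open>z\<close>, whereas \<open>y\<close> is not.\<close>

lemma rank_one_reduction:
  fixes X :: "'a::field^'k^'m"
  assumes y: "y \<in> vec.span (range (\<lambda>i. X $ i))" and c: "dotp y z \<noteq> 0"
  shows "rank (X - outer (inverse (dotp y z) *s (X *v z)) y) < rank X"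
proof -
  let ?W = "vec.span (range (\<lambda>i. X $ i))" and ?K = "{x. dotp x z = 0}"
  let ?Y = "X - outer (inverse (dotp y z) *s (X *v z)) y"
  have "?Y $ i \<in> ?W \<inter> ?K" for i
  proof
    have "?Y $ i = X $ i - (inverse (dotp y z) * (X *v z) $ i) *s y"
      by (simp add: outer_component)
    then show "?Y $ i \<in> ?W" "?Y $ i \<in> ?K"
      using y c by (simp_all add: vec.span_diff vec.span_scale vec.span_base dotp_diff_left
          dotp_scale_left matrix_vector_mult_component)
  qed
  then have "rank ?Y \<le> vec.dim (?W \<inter> ?K)"
    using vec.span_base by (blast intro: rank_le_dim)
  also have "\<dots> < vec.dim ?W"
    using y c by (intro dim_inter_kernel_less) simp_all
  also have "\<dots> = rank X"
    by (simp add: rank_eq_dim_rows[of X])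
  finally show ?thesis .
qed

lemma rank_one_reduction_axis:
  fixes X :: "'a::field^'k^'m"
  assumes "X $ i $ j \<noteq> 0"
  shows "rank (X - outer (inverse (X $ i $ j) *s (X *v axis j 1)) (X $ i)) < rank X"
  using rank_one_reduction[of "X $ i" X "axis j 1"] assms
  by (simp add: dotp_axis_right vec.span_base)

lemma rank_outer_le: "rank (outer u v) \<le> 1"
proof -
  have "rank (outer u v) \<le> vec.dim {v}"
    by (rule rank_le_dim) (simp add: outer_component vec.span_scale vec.span_base)
  also have "\<dots> \<le> 1"
    using vec.dim_le_card[of "{v}" "{v}"] by (simp add: vec.span_base)
  finally show ?thesis .
qed

lemma outer_congruence: "P ** outer u v ** transpose Q = outer (P *v u) (Q *v v)"
  by (simp add: vec_eq_iff outer_def matrix_matrix_mult_def matrix_vector_mult_def transpose_def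
      sum_distrib_left sum_distrib_right mult_ac) (intro allI sum.swap)

lemma rank_sum_outer_le_dim_left:
  fixes u :: "'i \<Rightarrow> 'a::field^'m" and v :: "'i \<Rightarrow> 'a^'k"
  assumes "finite I"
  shows "rank (\<Sum>j\<in>I. outer (u j) (v j)) \<le> vec.dim (u ` I)"
proof -
  obtain B where B: "B \<subseteq> u ` I" "vec.independent B" "u ` I \<subseteq> vec.span B"
    "card B = vec.dim (u ` I)"
    using vec.basis_exists by blast
  have "finite B"
    using B(2) vec.finiteI_independent by blast
  have "\<forall>j\<in>I. u j \<in> vec.span B"
    using B(3) by blast
  then have "\<forall>j\<in>I. \<exists>c. u j = (\<Sum>b\<in>B. c b *s b)"
    unfolding vec.span_finite[OF \<open>finite B\<close>] by blast
  then obtain c where c: "\<forall>j\<in>I. u j = (\<Sum>b\<in>B. c j b *s b)"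
    by metis
  have "(\<Sum>j\<in>I. outer (u j) (v j)) = (\<Sum>j\<in>I. outer (\<Sum>b\<in>B. c j b *s b) (v j))"
    by (rule sum.cong) (simp_all add: c)
  also have "\<dots> = (\<Sum>b\<in>B. outer b (\<Sum>j\<in>I. c j b *s v j))"
    by (simp add: vec_eq_iff outer_def sum_distrib_left sum_distrib_right mult_ac)
      (intro allI sum.swap)
  finally have "rank (\<Sum>j\<in>I. outer (u j) (v j)) \<le> (\<Sum>b\<in>B. rank (outer b (\<Sum>j\<in>I. c j b *s v j)))"
    by (simp only: rank_sum_le)
  also have "\<dots> \<le> (\<Sum>b\<in>B. 1)"
    by (intro sum_mono rank_outer_le)
  finally show ?thesis
    using B(4) by simp
qed

lemma independent_if_card_le_dim:
  assumes "finite I" "card I \<le> vec.dim (b ` I)"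
  shows "inj_on b I \<and> vec.independent (b ` I)"
proof -
  have "vec.dim (b ` I) \<le> card (b ` I)"
    using assms(1) by (intro vec.dim_le_card) (auto intro: vec.span_base)
  then have "card (b ` I) = card I" "vec.dim (b ` I) = card (b ` I)"
    using assms card_image_le[of I b] by linarith+
  then show ?thesis
    using assms(1) vec.card_eq_dim[of "b ` I" "b ` I"]
    by (auto simp: eq_card_imp_inj_on vec.span_base)
qed

lemma independent_if_rank_eq_card:
  fixes X :: "'a::field^'k^'m"
  assumes "finite I" "\<And>i. X $ i \<in> vec.span (b ` I)" "rank X = card I"
  shows "inj_on b I \<and> vec.independent (b ` I)"
  using assms rank_le_dim[of X "b ` I"] by (intro independent_if_card_le_dim) auto

lemma independent_if_rank_sum_outer:
  fixes u :: "'i \<Rightarrow> 'a::field^'m" and v :: "'i \<Rightarrow> 'a^'k"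
  assumes "finite I" "rank (\<Sum>j\<in>I. outer (u j) (v j)) = card I"
  shows "inj_on u I \<and> vec.independent (u ` I)" "inj_on v I \<and> vec.independent (v ` I)"
proof -
  show "inj_on u I \<and> vec.independent (u ` I)"
    using assms rank_sum_outer_le_dim_left[of I u v] by (intro independent_if_card_le_dim) auto
  show "inj_on v I \<and> vec.independent (v ` I)"
  proof (rule independent_if_rank_eq_card[OF assms(1) _ assms(2)])
    fix i
    show "(\<Sum>j\<in>I. outer (u j) (v j)) $ i \<in> vec.span (v ` I)"
      by (simp add: outer_component vec.span_sum vec.span_scale vec.span_base)
  qed
qed

lemma invertible_matrix_mapping:
  fixes b b' :: "'i \<Rightarrow> 'a::field^'n"
  assumes "inj_on b I \<and> vec.independent (b ` I)" "inj_on b' I \<and> vec.independent (b' ` I)"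
  obtains P where "invertible P" "\<forall>j\<in>I. P *v b j = b' j"
proof -
  define f where "f = b' \<circ> the_inv_into I b"
  have f: "f (b j) = b' j" if "j \<in> I" for j
    using that assms(1) by (simp add: f_def the_inv_into_f_f)
  then have "f ` b ` I = b' ` I" "inj_on f (b ` I)"
    using assms(2) by (auto simp: image_image inj_on_def cong: image_cong)
  then obtain g where g: "Vector_Spaces.linear (*s) (*s) g" "inj g" "\<forall>x\<in>b ` I. g x = f x"
    using vec.linear_independent_extend_inj[of "b ` I" f] assms by auto
  obtain h where h: "Vector_Spaces.linear (*s) (*s) h" "\<And>x. h (g x) = x"
    using vec.linear_injective_left_inverse[OF g(1,2)] by (auto simp: fun_eq_iff)
  have "matrix h ** matrix g = mat 1"
    by (simp add: matrix_eq matrix_vector_mul_assoc[symmetric] matrix_works g(1) h)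
  then have "invertible (matrix g)"
    using invertible_left_inverse by blast
  moreover have "matrix g *v b j = b' j" if "j \<in> I" for j
    using that g(3) f by (simp add: matrix_works[OF g(1)])
  ultimately show ?thesis
    using that by blast
qed

section \<open>Bilinear forms graphs\<close>

lemma rank_one_eq_outer:
  fixes X :: "'a::field^'k^'m"
  assumes "rank X = 1"
  obtains u v where "X = outer u v"
proof -
  obtain i j where "X $ i $ j \<noteq> 0"
    using assms rank_eq_0_gen by (metis vec_eq_iff zero_index zero_neq_one)
  then have "rank (X - outer (inverse (X $ i $ j) *s (X *v axis j 1)) (X $ i)) = 0"
    using rank_one_reduction_axis[of X i j] assms by simp
  then show ?thesis
    using that by (simp add: rank_eq_0_gen)
qed

lemma rank_one_families_congruent:
  fixes d d' :: "nat \<Rightarrow> 'a::field^'k^'m"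
  assumes d: "\<forall>j<l. rank (d j) = 1" "rank (\<Sum>j<l. d j) = l"
    and d': "\<forall>j<l. rank (d' j) = 1" "rank (\<Sum>j<l. d' j) = l"
  obtains P Q where "invertible P" "invertible Q" "\<forall>j<l. P ** d j ** transpose Q = d' j"
proof -
  have "\<forall>j<l. \<exists>u v. d j = outer u v" "\<forall>j<l. \<exists>u v. d' j = outer u v"
    using d(1) d'(1) rank_one_eq_outer by blast+
  then obtain u v u' v' where uv: "\<forall>j<l. d j = outer (u j) (v j)"
    and uv': "\<forall>j<l. d' j = outer (u' j) (v' j)"
    by metis
  have "(\<Sum>j<l. d j) = (\<Sum>j<l. outer (u j) (v j))" "(\<Sum>j<l. d' j) = (\<Sum>j<l. outer (u' j) (v' j))"
    using uv uv' by (auto intro: sum.cong)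
  then have r: "rank (\<Sum>j<l. outer (u j) (v j)) = card {..<l}"
    and r': "rank (\<Sum>j<l. outer (u' j) (v' j)) = card {..<l}"
    using d(2) d'(2) by simp_all
  obtain P where "invertible P" "\<forall>j\<in>{..<l}. P *v u j = u' j"
    by (rule invertible_matrix_mapping[OF independent_if_rank_sum_outer(1)[OF finite_lessThan r]
          independent_if_rank_sum_outer(1)[OF finite_lessThan r']])
  moreover obtain Q where "invertible Q" "\<forall>j\<in>{..<l}. Q *v v j = v' j"
    by (rule invertible_matrix_mapping[OF independent_if_rank_sum_outer(2)[OF finite_lessThan r]
          independent_if_rank_sum_outer(2)[OF finite_lessThan r']])
  ultimately show ?thesis
    using that uv uv' by (simp add: outer_congruence)
qed

theorem bil_geodesic_transitive: "geodesic_transitive (UNIV :: ('a::field^'k^'m) set) bil_adj"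
proof -
  interpret rank_distance_graph "UNIV :: ('a^'k^'m) set" rank 1
  proof
    fix X :: "'a^'k^'m" assume "X \<noteq> 0"
    then obtain i j where "X $ i $ j \<noteq> 0"
      by (metis vec_eq_iff zero_index)
    then have "rank (X - outer (inverse (X $ i $ j) *s (X *v axis j 1)) (X $ i)) + 1 \<le> rank X"
      using rank_one_reduction_axis by (simp add: Suc_le_eq)
    then show "\<exists>D\<in>UNIV. rank D \<le> 1 \<and> rank (X - D) + 1 \<le> rank X"
      using rank_outer_le by blast
  qed (auto simp: rank_eq_0_gen rank_uminus rank_add_le)
  have "bil_adj = (\<lambda>X Y :: 'a^'k^'m. rank (X - Y) = 1)"
    by (simp add: fun_eq_iff bil_adj_def)
  moreover have "geodesic_transitive (UNIV :: ('a^'k^'m) set) (\<lambda>X Y. rank (X - Y) = 1)"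
  proof (rule geodesic_transitiveI)
    fix l and d d' :: "nat \<Rightarrow> 'a^'k^'m"
    assume "\<forall>j<l. d j \<in> UNIV \<and> rank (d j) = 1" "\<forall>j<l. d' j \<in> UNIV \<and> rank (d' j) = 1"
      "rank (\<Sum>j<l. d j) = 1 * l" "rank (\<Sum>j<l. d' j) = 1 * l"
    then have "\<forall>j<l. rank (d j) = 1" "rank (\<Sum>j<l. d j) = l"
      "\<forall>j<l. rank (d' j) = 1" "rank (\<Sum>j<l. d' j) = l"
      by simp_all
    then obtain P Q where PQ: "invertible P" "invertible Q" "\<forall>j<l. P ** d j ** transpose Q = d' j"
      by (rule rank_one_families_congruent)
    obtain P' Q' where "P' ** P = mat 1" "Q' ** Q = mat 1"
      using PQ invertible_left_inverse by metis
    then show "\<exists>L. Modules.additive L \<and> bij_betw L UNIV UNIV \<and> (\<forall>X\<in>UNIV. rank (L X) = rank X)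
        \<and> (\<forall>j<l. L (d j) = d' j)"
      using PQ(3) by (intro congruence_isometry[where A' = P' and B' = "transpose Q'"])
        (simp_all add: matrix_transpose_mul[symmetric])
  qed
  ultimately show ?thesis
    by simp
qed

section \<open>Alternating forms graphs\<close>

lemma alt_verts_iff: "X \<in> alt_verts \<longleftrightarrow> (\<forall>i j. X $ j $ i = - X $ i $ j) \<and> (\<forall>i. X $ i $ i = 0)"
  by (simp add: alt_verts_def vec_eq_iff transpose_def)

lemma alt_verts_zero: "0 \<in> alt_verts"
  by (simp add: alt_verts_iff)

lemma alt_verts_diff:
  assumes "X \<in> alt_verts" "Y \<in> alt_verts"
  shows "X - Y \<in> alt_verts"
proof -
  have "transpose (X - Y) = transpose X - transpose Y"
    by (simp add: transpose_def vec_eq_iff)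
  then show ?thesis
    using assms by (simp add: alt_verts_def)
qed

lemma skew_double_sum_eq_0:
  fixes f :: "'i \<Rightarrow> 'i \<Rightarrow> 'a::ab_group_add"
  assumes "finite A" "\<And>a b. f b a = - f a b" "\<And>a. f a a = 0"
  shows "(\<Sum>a\<in>A. \<Sum>b\<in>A. f a b) = 0"
  using assms(1)
proof (induction A rule: finite_induct)
  case (insert x A)
  have "(\<Sum>a\<in>insert x A. \<Sum>b\<in>insert x A. f a b)
      = (f x x + (\<Sum>b\<in>A. f x b)) + (\<Sum>a\<in>A. f a x + (\<Sum>b\<in>A. f a b))"
    using insert(1,2) by simp
  also have "\<dots> = (\<Sum>b\<in>A. f x b + f b x) + (\<Sum>a\<in>A. \<Sum>b\<in>A. f a b)"
    by (simp add: assms(3) sum.distrib algebra_simps)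
  also have "\<dots> = 0"
    using insert(3) by (simp add: assms(2)[of x])
  finally show ?case .
qed simp

lemma alt_verts_congruence:
  assumes X: "X \<in> alt_verts"
  shows "P ** X ** transpose P \<in> alt_verts"
proof -
  have skew: "X $ b $ a = - X $ a $ b" and diag: "X $ a $ a = 0" for a b
    using X unfolding alt_verts_iff by blast+
  have "transpose (P ** X ** transpose P) = P ** transpose X ** transpose P"
    by (simp add: matrix_transpose_mul matrix_mul_assoc)
  also have "\<dots> = P ** (- X) ** transpose P"
    using X by (simp add: alt_verts_def)
  also have "\<dots> = - (P ** X ** transpose P)"
    by (rule additive.minus[OF additive_congruence])
  finally have "transpose (P ** X ** transpose P) = - (P ** X ** transpose P)" .
  moreover have "(P ** X ** transpose P) $ i $ i = 0" for i
  proof -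
    have "(P ** X ** transpose P) $ i $ i = (\<Sum>a\<in>UNIV. \<Sum>b\<in>UNIV. P $ i $ a * X $ a $ b * P $ i $ b)"
      by (simp add: matrix_matrix_mult_def transpose_def sum_distrib_right) (rule sum.swap)
    also have "\<dots> = 0"
    proof (rule skew_double_sum_eq_0)
      fix a b
      show "P $ i $ b * X $ b $ a * P $ i $ a = - (P $ i $ a * X $ a $ b * P $ i $ b)"
        using skew[of b a] by (simp add: mult_ac)
    qed (simp_all add: diag)
    finally show ?thesis .
  qed
  ultimately show ?thesis
    by (simp add: alt_verts_def)
qed

definition wedge :: "'a::field^'n \<Rightarrow> 'a^'n \<Rightarrow> 'a^'n^'n" where
  "wedge u v = outer u v - outer v u"

lemma wedge_in_alt_verts: "wedge u v \<in> alt_verts"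
  by (simp add: alt_verts_iff wedge_def outer_def mult.commute)

lemma rank_wedge_le: "rank (wedge u v) \<le> 2"
proof -
  have "rank (wedge u v) \<le> vec.dim {u, v}"
    by (rule rank_le_dim)
      (simp add: wedge_def outer_component vec.span_diff vec.span_scale vec.span_base)
  also have "\<dots> \<le> card {u, v}"
    by (rule vec.dim_le_card) (auto intro: vec.span_base)
  also have "\<dots> \<le> 2"
    by (simp add: card_insert_if)
  finally show ?thesis .
qed

lemma wedge_congruence: "P ** wedge u v ** transpose P = wedge (P *v u) (P *v v)"
  using additive.diff[OF additive_congruence[of P "transpose P"]]
  by (simp add: wedge_def outer_congruence)

text \<open>Two successive rank-one reductions, along columns \<open>j\<close> and \<open>i\<close> of an entry
  \<open>a = X $ i $ j \<noteq> 0\<close>, remove the wedge of rows \<open>i\<close> and \<open>j\<close>.\<close>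

lemma alt_reduction:
  fixes X :: "'a::field^'n^'n"
  assumes X: "X \<in> alt_verts" and "X $ i $ j \<noteq> 0"
  shows "rank (X - wedge (inverse (X $ i $ j) *s X $ i) (X $ j)) + 2 \<le> rank X"
proof -
  define a where "a = X $ i $ j"
  have "a \<noteq> 0"
    using assms(2) by (simp add: a_def)
  have skew: "X $ q $ p = - X $ p $ q" and diag: "X $ p $ p = 0" for p q
    using X unfolding alt_verts_iff by blast+
  define X1 where "X1 = X - outer (inverse a *s (X *v axis j 1)) (X $ i)"
  have 1: "rank X1 < rank X"
    using rank_one_reduction_axis[of X i j] \<open>a \<noteq> 0\<close> by (simp add: X1_def a_def)
  have X1j: "X1 $ j = X $ j" "X1 $ j $ i = - a"
    using diag[of j] skew[of i j] by (simp_all add: X1_def outer_component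
        matrix_vector_mult_component dotp_axis_right a_def)
  have 2: "rank (X1 - outer (inverse (- a) *s (X1 *v axis i 1)) (X1 $ j)) < rank X1"
    using rank_one_reduction_axis[of X1 j i] X1j \<open>a \<noteq> 0\<close> by simp
  have "X1 - outer (inverse (- a) *s (X1 *v axis i 1)) (X1 $ j) = X - wedge (inverse a *s X $ i) (X $ j)"
    unfolding vec_eq_iff
  proof (intro allI)
    fix p q
    have "(X1 *v axis i 1) $ p = X $ p $ i"
      using diag[of i] by (simp add: X1_def matrix_vector_mult_component dotp_axis_right
          outer_component)
    then have "(X1 - outer (inverse (- a) *s (X1 *v axis i 1)) (X1 $ j)) $ p $ q
        = X $ p $ q - inverse a * X $ p $ j * X $ i $ q + inverse a * X $ p $ i * X $ j $ q"
      by (simp add: X1j(1)) (simp add: X1_def outer_def matrix_vector_mult_component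
          dotp_axis_right a_def)
    also have "\<dots> = (X - wedge (inverse a *s X $ i) (X $ j)) $ p $ q"
      using skew[of p i] skew[of p j] by (simp add: wedge_def outer_def algebra_simps)
    finally show "(X1 - outer (inverse (- a) *s (X1 *v axis i 1)) (X1 $ j)) $ p $ q
        = (X - wedge (inverse a *s X $ i) (X $ j)) $ p $ q" .
  qed
  then show ?thesis
    using 1 2 by (simp add: a_def)
qed

lemma rank_two_eq_wedge:
  assumes "X \<in> alt_verts" "rank X = 2"
  obtains u v where "X = wedge u v"
proof -
  obtain i j where "X $ i $ j \<noteq> 0"
    using assms(2) rank_eq_0_gen by (metis vec_eq_iff zero_index zero_neq_numeral)
  then have "rank (X - wedge (inverse (X $ i $ j) *s X $ i) (X $ j)) = 0"
    using alt_reduction[OF assms(1)] assms(2) by fastforce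
  then show ?thesis
    using that by (simp add: rank_eq_0_gen)
qed

lemma independent_if_rank_sum_wedge:
  fixes u v :: "nat \<Rightarrow> 'a::field^'n"
  assumes "rank (\<Sum>j<l. wedge (u j) (v j)) = 2 * l"
  defines "b \<equiv> \<lambda>k. if even k then u (k div 2) else v (k div 2)"
  shows "inj_on b {..<2 * l} \<and> vec.independent (b ` {..<2 * l})"
proof (rule independent_if_rank_eq_card)
  fix p
  have "u j \<in> b ` {..<2 * l}" "v j \<in> b ` {..<2 * l}" if "j < l" for j
  proof -
    show "u j \<in> b ` {..<2 * l}"
      using that by (intro image_eqI[of _ _ "2 * j"]) (auto simp: b_def)
    show "v j \<in> b ` {..<2 * l}"
      using that by (intro image_eqI[of _ _ "2 * j + 1"]) (auto simp: b_def)
  qed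
  then have "u j $ p *s v j - v j $ p *s u j \<in> vec.span (b ` {..<2 * l})" if "j < l" for j
    using that by (intro vec.span_diff vec.span_scale vec.span_base) simp_all
  then show "(\<Sum>j<l. wedge (u j) (v j)) $ p \<in> vec.span (b ` {..<2 * l})"
    by (simp add: wedge_def outer_component) (rule vec.span_sum, simp)
qed (use assms in simp_all)

lemma wedge_families_congruent:
  fixes d d' :: "nat \<Rightarrow> 'a::field^'n^'n"
  assumes "\<forall>j<l. d j \<in> alt_verts \<and> rank (d j) = 2" "\<forall>j<l. d' j \<in> alt_verts \<and> rank (d' j) = 2"
    and "rank (\<Sum>j<l. d j) = 2 * l" "rank (\<Sum>j<l. d' j) = 2 * l"
  obtains P where "invertible P" "\<forall>j<l. P ** d j ** transpose P = d' j"
proof -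
  have "\<forall>j<l. \<exists>u v. d j = wedge u v" "\<forall>j<l. \<exists>u v. d' j = wedge u v"
    using assms(1,2) rank_two_eq_wedge by blast+
  then obtain u v u' v' where uv: "\<forall>j<l. d j = wedge (u j) (v j)"
    and uv': "\<forall>j<l. d' j = wedge (u' j) (v' j)"
    by metis
  have "(\<Sum>j<l. d j) = (\<Sum>j<l. wedge (u j) (v j))" "(\<Sum>j<l. d' j) = (\<Sum>j<l. wedge (u' j) (v' j))"
    using uv uv' by (auto intro: sum.cong)
  then have r: "rank (\<Sum>j<l. wedge (u j) (v j)) = 2 * l" "rank (\<Sum>j<l. wedge (u' j) (v' j)) = 2 * l"
    using assms(3,4) by simp_all
  obtain P where P: "invertible P" "\<forall>k\<in>{..<2 * l}.
      P *v (if even k then u (k div 2) else v (k div 2)) = (if even k then u' (k div 2) else v' (k div 2))"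
    by (rule invertible_matrix_mapping[OF independent_if_rank_sum_wedge[OF r(1)]
          independent_if_rank_sum_wedge[OF r(2)]])
  have "P *v u j = u' j \<and> P *v v j = v' j" if "j < l" for j
    using that bspec[OF P(2), of "2 * j"] bspec[OF P(2), of "2 * j + 1"] by simp
  then show ?thesis
    using that P(1) uv uv' by (simp add: wedge_congruence)
qed

theorem alt_geodesic_transitive: "geodesic_transitive (alt_verts :: ('a::field^'n^'n) set) alt_adj"
proof -
  interpret rank_distance_graph "alt_verts :: ('a^'n^'n) set" rank 2
  proof
    fix X :: "'a^'n^'n" assume "X \<in> alt_verts" "X \<noteq> 0"
    moreover obtain i j where "X $ i $ j \<noteq> 0"
      using \<open>X \<noteq> 0\<close> by (metis vec_eq_iff zero_index)
    ultimately show "\<exists>D\<in>alt_verts. rank D \<le> 2 \<and> rank (X - D) + 2 \<le> rank X"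
      using alt_reduction wedge_in_alt_verts rank_wedge_le by blast
  qed (auto simp: alt_verts_zero alt_verts_diff rank_eq_0_gen rank_uminus rank_add_le)
  have "alt_adj = (\<lambda>X Y :: 'a^'n^'n. rank (X - Y) = 2)"
    by (simp add: fun_eq_iff alt_adj_def)
  moreover have "geodesic_transitive (alt_verts :: ('a^'n^'n) set) (\<lambda>X Y. rank (X - Y) = 2)"
  proof (rule geodesic_transitiveI)
    fix l and d d' :: "nat \<Rightarrow> 'a^'n^'n"
    assume "\<forall>j<l. d j \<in> alt_verts \<and> rank (d j) = 2" "\<forall>j<l. d' j \<in> alt_verts \<and> rank (d' j) = 2"
      "rank (\<Sum>j<l. d j) = 2 * l" "rank (\<Sum>j<l. d' j) = 2 * l"
    then obtain P where P: "invertible P" "\<forall>j<l. P ** d j ** transpose P = d' j"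
      by (rule wedge_families_congruent)
    obtain P' where "P' ** P = mat 1"
      using P(1) invertible_left_inverse by metis
    then show "\<exists>L. Modules.additive L \<and> bij_betw L alt_verts alt_verts
        \<and> (\<forall>X\<in>alt_verts. rank (L X) = rank X) \<and> (\<forall>j<l. L (d j) = d' j)"
      using P(2) alt_verts_congruence
      by (intro congruence_isometry[where A' = P' and B' = "transpose P'"])
        (simp_all add: matrix_transpose_mul[symmetric])
  qed
  ultimately show ?thesis
    by simp
qed

section \<open>Hermitian forms graphs\<close>

definition map_vec :: "('a \<Rightarrow> 'b) \<Rightarrow> 'a^'n \<Rightarrow> 'b^'n" where
  "map_vec f v = (\<chi> i. f (v $ i))"

definition map_mat :: "('a \<Rightarrow> 'b) \<Rightarrow> 'a^'n^'m \<Rightarrow> 'b^'n^'m" where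
  "map_mat f M = (\<chi> i j. f (M $ i $ j))"

lemma map_mat_transpose: "map_mat f (transpose M) = transpose (map_mat f M)"
  by (simp add: map_mat_def transpose_def vec_eq_iff)

locale finite_field_involution =
  fixes \<sigma> :: "'a::{field,finite} \<Rightarrow> 'a"
  assumes automorphism: "field_automorphism \<sigma>" and involution: "\<sigma> \<circ> \<sigma> = id"
    and nontrivial: "\<sigma> \<noteq> id"
begin

lemma add [simp]: "\<sigma> (x + y) = \<sigma> x + \<sigma> y"
  and mult [simp]: "\<sigma> (x * y) = \<sigma> x * \<sigma> y"
  and one [simp]: "\<sigma> 1 = 1"
  and involutive [simp]: "\<sigma> (\<sigma> x) = x"
  using automorphism involution by (simp_all add: field_automorphism_def fun_eq_iff)

lemma zero [simp]: "\<sigma> 0 = 0"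
  using add[of 0 0] by (metis add_cancel_right_right add_0)

lemma minus [simp]: "\<sigma> (- x) = - \<sigma> x"
  using add[of x "- x"] by (simp add: eq_neg_iff_add_eq_0 add.commute)

lemma diff [simp]: "\<sigma> (x - y) = \<sigma> x - \<sigma> y"
  using add[of x "- y"] by simp

lemma eq_0_iff [simp]: "\<sigma> x = 0 \<longleftrightarrow> x = 0"
  by (metis involutive zero)

lemma inverse [simp]: "\<sigma> (inverse x) = inverse (\<sigma> x)"
proof (cases "x = 0")
  case False
  then have "\<sigma> x * \<sigma> (inverse x) = 1"
    by (simp flip: mult)
  then show ?thesis
    by (rule inverse_unique[symmetric])
qed simp

lemma divide [simp]: "\<sigma> (x / y) = \<sigma> x / \<sigma> y"
  by (simp add: divide_inverse)

lemma sum [simp]: "\<sigma> (sum f A) = (\<Sum>a\<in>A. \<sigma> (f a))"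
  by (induction A rule: infinite_finite_induct) simp_all

lemma non_fixed_exists: "\<exists>\<theta>. \<sigma> \<theta> \<noteq> \<theta>"
  using nontrivial by (auto simp: fun_eq_iff)

lemma trace_nonzero_exists: "\<exists>\<mu>. \<mu> + \<sigma> \<mu> \<noteq> 0"
proof (rule ccontr)
  assume "\<nexists>\<mu>. \<mu> + \<sigma> \<mu> \<noteq> 0"
  then have trace: "\<mu> + \<sigma> \<mu> = 0" for \<mu>
    by blast
  obtain \<theta> where "\<sigma> \<theta> \<noteq> \<theta>"
    using non_fixed_exists by blast
  moreover have "\<sigma> \<theta> = - \<theta>"
    using trace[of \<theta>] by (simp add: eq_neg_iff_add_eq_0 add.commute)
  moreover have "\<theta> + \<theta> = (1 + \<sigma> 1) * \<theta>"
    by (simp add: distrib_right)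
  then have "- \<theta> = \<theta>"
    using trace[of 1] by (simp add: eq_neg_iff_add_eq_0)
  ultimately show False
    by simp
qed

definition fixed_field :: "'a set" where
  "fixed_field = {x. \<sigma> x = x}"

definition unit_norm :: "'a set" where
  "unit_norm = {x. x * \<sigma> x = 1}"

lemma fixed_field_decomposition:
  assumes \<theta>: "\<sigma> \<theta> \<noteq> \<theta>"
  shows "bij_betw (\<lambda>(a, b). a + b * \<theta>) (fixed_field \<times> fixed_field) UNIV"
proof -
  have d: "\<theta> - \<sigma> \<theta> \<noteq> 0"
    using \<theta> by simp
  have "inj_on (\<lambda>(a, b). a + b * \<theta>) (fixed_field \<times> fixed_field)"
  proof (rule inj_onI, clarify)
    fix a b a' b'
    assume "a \<in> fixed_field" "b \<in> fixed_field" "a' \<in> fixed_field" "b' \<in> fixed_field"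
      and eq: "a + b * \<theta> = a' + b' * \<theta>"
    then have fixed: "\<sigma> a = a" "\<sigma> b = b" "\<sigma> a' = a'" "\<sigma> b' = b'"
      by (auto simp: fixed_field_def)
    show "a = a' \<and> b = b'"
    proof (cases "b = b'")
      case False
      then have "\<theta> = (a' - a) / (b - b')"
        using eq by (simp add: field_simps)
      then show ?thesis
        using \<theta> fixed by simp
    qed (use eq in simp)
  qed
  moreover have "x \<in> (\<lambda>(a, b). a + b * \<theta>) ` (fixed_field \<times> fixed_field)" for x
  proof -
    define b where "b = (x - \<sigma> x) / (\<theta> - \<sigma> \<theta>)"
    define a where "a = x - b * \<theta>"
    have "\<sigma> b = b"
      unfolding b_def using d by (simp add: field_simps)
    moreover have "\<sigma> a = a"
      unfolding a_def using \<open>\<sigma> b = b\<close> d by (simp add: b_def field_simps)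
    ultimately show ?thesis
      by (auto simp: fixed_field_def a_def intro!: image_eqI[of _ _ "(a, b)"])
  qed
  ultimately show ?thesis
    by (auto simp: bij_betw_def)
qed

lemma card_UNIV_eq_square: "CARD('a) = card fixed_field * card fixed_field"
proof -
  obtain \<theta> where "\<sigma> \<theta> \<noteq> \<theta>"
    using non_fixed_exists by blast
  then show ?thesis
    using bij_betw_same_card[OF fixed_field_decomposition] by (simp add: card_cartesian_product)
qed

lemma unit_norm_eq_quotient:
  assumes "x \<in> unit_norm"
  obtains y where "y \<noteq> 0" "x = y / \<sigma> y"
proof -
  obtain \<theta> where \<theta>: "\<sigma> \<theta> \<noteq> \<theta>"
    using non_fixed_exists by blast
  define c where "c = (if 1 + x = 0 then \<theta> else 1)"
  define y where "y = c + x * \<sigma> c"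
  have x: "x * \<sigma> x = 1"
    using assms by (simp add: unit_norm_def)
  have "y \<noteq> 0"
  proof (cases "1 + x = 0")
    case True
    then have "x = - 1"
      by (simp add: eq_neg_iff_add_eq_0 add.commute)
    then show ?thesis
      using True \<theta> by (simp add: y_def c_def)
  qed (simp add: y_def c_def)
  moreover have "x * \<sigma> y = y"
    using x by (simp add: y_def algebra_simps flip: mult.assoc)
  ultimately show ?thesis
    using that by (simp add: eq_divide_eq)
qed

lemma card_unit_norm_le: "card unit_norm \<le> card fixed_field + 1"
proof -
  obtain \<theta> where \<theta>: "\<sigma> \<theta> \<noteq> \<theta>"
    using non_fixed_exists by blast
  let ?q = "\<lambda>y. y / \<sigma> y"
  have "unit_norm \<subseteq> insert 1 (?q ` (\<lambda>g. g + \<theta>) ` fixed_field)"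
  proof
    fix x assume "x \<in> unit_norm"
    then obtain y where y: "y \<noteq> 0" "x = ?q y"
      by (rule unit_norm_eq_quotient)
    have "y \<in> (\<lambda>(a, b). a + b * \<theta>) ` (fixed_field \<times> fixed_field)"
      using bij_betw_imp_surj_on[OF fixed_field_decomposition[OF \<theta>]] by simp
    then obtain a b where ab: "a \<in> fixed_field" "b \<in> fixed_field" "y = a + b * \<theta>"
      by auto
    then have fixed: "\<sigma> a = a" "\<sigma> b = b"
      by (auto simp: fixed_field_def)
    show "x \<in> insert 1 (?q ` (\<lambda>g. g + \<theta>) ` fixed_field)"
    proof (cases "b = 0")
      case True
      then show ?thesis
        using y ab fixed by simp
    next
      case False
      then have "y = b * (a / b + \<theta>)" "a / b \<in> fixed_field"
        using ab fixed by (simp_all add: field_simps fixed_field_def)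
      then have "x = ?q (a / b + \<theta>)" "a / b + \<theta> \<in> (\<lambda>g. g + \<theta>) ` fixed_field"
        using y False fixed by simp_all
      then show ?thesis
        by blast
    qed
  qed
  then have "card unit_norm \<le> card (insert 1 (?q ` (\<lambda>g. g + \<theta>) ` fixed_field))"
    by (intro card_mono) simp_all
  also have "\<dots> \<le> card fixed_field + 1"
    using card_image_le[of fixed_field "\<lambda>g. ?q (g + \<theta>)"] card_insert_le_m1
    by (simp add: card_insert_if image_image)
  finally show ?thesis .
qed

text \<open>With \<open>q = card fixed_field\<close>: the \<open>(q - 1) * (q + 1)\<close> nonzero elements are covered by one
  multiplicative translate of \<open>unit_norm\<close>, of size at most \<open>q + 1\<close>, per value of the norm, so the
  norm takes at least \<open>q - 1\<close> nonzero values.\<close>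

lemma card_nonzero_le_norm_values:
  "card (UNIV - {0 :: 'a}) \<le> card ((\<lambda>x. \<sigma> x * x) ` (UNIV - {0})) * (card fixed_field + 1)"
proof -
  let ?N = "\<lambda>x. \<sigma> x * x" and ?F = "UNIV - {0} :: 'a set"
  let ?r = "inv_into ?F ?N"
  have "?F \<subseteq> (\<Union>b\<in>?N ` ?F. (\<lambda>h. ?r b * h) ` unit_norm)"
  proof
    fix x :: 'a assume x: "x \<in> ?F"
    then have "?N x \<in> ?N ` ?F"
      by blast
    note r = inv_into_into[OF this] f_inv_into_f[OF this]
    then have "x / ?r (?N x) \<in> unit_norm"
      using x by (simp add: unit_norm_def field_simps)
    moreover have "x = ?r (?N x) * (x / ?r (?N x))"
      using r by simp
    ultimately show "x \<in> (\<Union>b\<in>?N ` ?F. (\<lambda>h. ?r b * h) ` unit_norm)"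
      using x by blast
  qed
  then have "card ?F \<le> card (\<Union>b\<in>?N ` ?F. (\<lambda>h. ?r b * h) ` unit_norm)"
    by (intro card_mono) simp_all
  also have "\<dots> \<le> (\<Sum>b\<in>?N ` ?F. card ((\<lambda>h. ?r b * h) ` unit_norm))"
    by (rule card_UN_le) simp
  also have "\<dots> \<le> (\<Sum>b\<in>?N ` ?F. card fixed_field + 1)"
    using card_unit_norm_le by (intro sum_mono order.trans[OF card_image_le]) simp_all
  finally show ?thesis
    by simp
qed

lemma norm_surjective:
  assumes "\<sigma> a = a" "a \<noteq> 0"
  obtains k where "\<sigma> k * k = a"
proof -
  let ?N = "\<lambda>x. \<sigma> x * x" and ?F = "UNIV - {0} :: 'a set" and ?K = "fixed_field - {0}"
  let ?q = "card fixed_field"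
  have image: "?N ` ?F \<subseteq> ?K"
    by (auto simp: fixed_field_def mult.commute)
  have "(?q - 1) * (?q + 1) \<le> card (?N ` ?F) * (?q + 1)"
    using card_nonzero_le_norm_values card_UNIV_eq_square
    by (simp add: card_Diff_singleton algebra_simps)
  then have "?q - 1 \<le> card (?N ` ?F)"
    by (simp only: mult_le_cancel2)
  then have "card ?K \<le> card (?N ` ?F)"
    by (simp add: card_Diff_singleton fixed_field_def)
  moreover have "card (?N ` ?F) \<le> card ?K"
    by (rule card_mono[OF _ image]) simp
  ultimately have "?N ` ?F = ?K"
    using image by (intro card_subset_eq) simp_all
  moreover have "a \<in> ?K"
    using assms by (simp add: fixed_field_def)
  ultimately have "a \<in> ?N ` ?F"
    by simp
  then show ?thesis
    using that by blast
qed

lemma map_mat_mult: "map_mat \<sigma> (A ** B) = map_mat \<sigma> A ** map_mat \<sigma> B"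
  by (simp add: map_mat_def matrix_matrix_mult_def vec_eq_iff)

lemma map_mat_diff: "map_mat \<sigma> (A - B) = map_mat \<sigma> A - map_mat \<sigma> B"
  by (simp add: map_mat_def vec_eq_iff)

lemma map_mat_involutive [simp]: "map_mat \<sigma> (map_mat \<sigma> A) = A"
  by (simp add: map_mat_def vec_eq_iff)

lemma map_mat_vector_mult: "map_mat \<sigma> A *v map_vec \<sigma> v = map_vec \<sigma> (A *v v)"
  by (simp add: map_mat_def map_vec_def matrix_vector_mult_def vec_eq_iff)

lemma her_verts_iff: "X \<in> her_verts \<sigma> \<longleftrightarrow> transpose X = map_mat \<sigma> X"
  by (auto simp: her_verts_def map_mat_def transpose_def vec_eq_iff)

lemma her_verts_zero: "0 \<in> her_verts \<sigma>"
  by (simp add: her_verts_def)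

lemma her_verts_diff: "X \<in> her_verts \<sigma> \<Longrightarrow> Y \<in> her_verts \<sigma> \<Longrightarrow> X - Y \<in> her_verts \<sigma>"
  by (simp add: her_verts_iff map_mat_diff transpose_def vec_eq_iff)

lemma her_verts_congruence:
  assumes "X \<in> her_verts \<sigma>"
  shows "map_mat \<sigma> Q ** X ** transpose Q \<in> her_verts \<sigma>"
  using assms
  by (simp add: her_verts_iff matrix_transpose_mul map_mat_mult map_mat_transpose matrix_mul_assoc)

lemma hermitian_outer: "outer (map_vec \<sigma> w) w \<in> her_verts \<sigma>"
  by (simp add: her_verts_def outer_def map_vec_def mult.commute)

lemma hermitian_outer_congruence:
  "map_mat \<sigma> Q ** outer (map_vec \<sigma> w) w ** transpose Q = outer (map_vec \<sigma> (Q *v w)) (Q *v w)"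
  by (simp add: outer_congruence map_mat_vector_mult)

lemma hermitian_anisotropic_vector:
  assumes X: "X \<in> her_verts \<sigma>" and "X \<noteq> 0"
  obtains z where "dotp (map_vec \<sigma> (X *v z)) z \<noteq> 0"
proof -
  have her: "X $ j $ i = \<sigma> (X $ i $ j)" for i j
    using X unfolding her_verts_def by blast
  have form: "dotp (map_vec \<sigma> (X *v (axis i 1 + l *s axis j 1))) (axis i 1 + l *s axis j 1)
      = \<sigma> (X $ i $ i + l * X $ i $ j) + l * \<sigma> (X $ j $ i + l * X $ j $ j)" for i j l
    by (simp add: dotp_add_right dotp_scale_right dotp_axis_right map_vec_def
        matrix_vector_mult_component dotp_add_left dotp_scale_left)
  show ?thesis
  proof (cases "\<exists>i. X $ i $ i \<noteq> 0")
    case True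
    then obtain i where "X $ i $ i \<noteq> 0"
      by blast
    then show ?thesis
      using that[of "axis i 1 + 0 *s axis i 1"] form[of i 0 i] by simp
  next
    case False
    obtain i j where ij: "X $ i $ j \<noteq> 0"
      using \<open>X \<noteq> 0\<close> by (metis vec_eq_iff zero_index)
    obtain \<mu> where \<mu>: "\<mu> + \<sigma> \<mu> \<noteq> 0"
      using trace_nonzero_exists by blast
    define l where "l = \<mu> / X $ i $ j"
    have "\<sigma> (X $ i $ i + l * X $ i $ j) + l * \<sigma> (X $ j $ i + l * X $ j $ j) = \<sigma> \<mu> + \<mu>"
      using False ij her[of i j] by (simp add: l_def)
    then show ?thesis
      using that[of "axis i 1 + l *s axis j 1"] form[of i l j] \<mu> by (simp add: add.commute)
  qed
qed

text \<open>The rank-one reduction along an anisotropic vector \<open>z\<close>; its value \<open>c\<close> is fixed by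
  \<open>\<sigma>\<close>, so \<open>inverse c\<close> is a norm and the reducing matrix is again Hermitian.\<close>

lemma hermitian_reduction:
  assumes X: "X \<in> her_verts \<sigma>" and "X \<noteq> 0"
  obtains w where "rank (X - outer (map_vec \<sigma> w) w) < rank X"
proof -
  have "X $ j $ i = \<sigma> (X $ i $ j)" for i j
    using X unfolding her_verts_def by blast
  note her = this[symmetric]
  obtain z where c: "dotp (map_vec \<sigma> (X *v z)) z \<noteq> 0"
    using hermitian_anisotropic_vector[OF assms] by blast
  define y where "y = map_vec \<sigma> (X *v z)"
  define c where "c = dotp y z"
  have y: "y = (\<Sum>q\<in>UNIV. \<sigma> (z $ q) *s X $ q)"
    by (simp add: y_def map_vec_def matrix_vector_mult_def vec_eq_iff her mult.commute)
  have "\<sigma> c = c"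
    by (simp add: c_def y dotp_def her sum_distrib_left mult_ac) (rule sum.swap)
  then obtain k where k: "\<sigma> k * k = inverse c"
    using c norm_surjective[of "inverse c"] by (auto simp: c_def y_def)
  have "outer (map_vec \<sigma> (k *s y)) (k *s y) = outer (inverse c *s (X *v z)) y"
    by (simp add: outer_def map_vec_def y_def vec_eq_iff mult_ac flip: k)
  moreover have "y \<in> vec.span (range (\<lambda>i. X $ i))"
    unfolding y by (intro vec.span_sum vec.span_scale vec.span_base) simp
  ultimately show ?thesis
    using that[of "k *s y"] rank_one_reduction[of y X z] c by (simp add: c_def y_def)
qed

lemma hermitian_rank_one_eq:
  assumes "X \<in> her_verts \<sigma>" "rank X = 1"
  obtains w where "X = outer (map_vec \<sigma> w) w"
proof -
  have "X \<noteq> 0"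
    using assms(2) rank_eq_0_gen[of X] by simp
  then obtain w where "rank (X - outer (map_vec \<sigma> w) w) < rank X"
    using hermitian_reduction[OF assms(1)] by blast
  then show ?thesis
    using that assms(2) by (simp add: rank_eq_0_gen)
qed

lemma hermitian_families_congruent:
  fixes d d' :: "nat \<Rightarrow> 'a^'n^'n"
  assumes "\<forall>j<l. d j \<in> her_verts \<sigma> \<and> rank (d j) = 1" "\<forall>j<l. d' j \<in> her_verts \<sigma> \<and> rank (d' j) = 1"
    and "rank (\<Sum>j<l. d j) = 1 * l" "rank (\<Sum>j<l. d' j) = 1 * l"
  obtains Q where "invertible Q" "\<forall>j<l. map_mat \<sigma> Q ** d j ** transpose Q = d' j"
proof -
  have "\<forall>j<l. \<exists>w. d j = outer (map_vec \<sigma> w) w" "\<forall>j<l. \<exists>w. d' j = outer (map_vec \<sigma> w) w"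
    using assms(1,2) hermitian_rank_one_eq by blast+
  then obtain w w' where w: "\<forall>j<l. d j = outer (map_vec \<sigma> (w j)) (w j)"
    and w': "\<forall>j<l. d' j = outer (map_vec \<sigma> (w' j)) (w' j)"
    by metis
  have "(\<Sum>j<l. d j) = (\<Sum>j<l. outer (map_vec \<sigma> (w j)) (w j))"
    "(\<Sum>j<l. d' j) = (\<Sum>j<l. outer (map_vec \<sigma> (w' j)) (w' j))"
    using w w' by (auto intro: sum.cong)
  then have r: "rank (\<Sum>j<l. outer (map_vec \<sigma> (w j)) (w j)) = card {..<l}"
    and r': "rank (\<Sum>j<l. outer (map_vec \<sigma> (w' j)) (w' j)) = card {..<l}"
    using assms(3,4) by simp_all
  obtain Q where "invertible Q" "\<forall>j\<in>{..<l}. Q *v w j = w' j"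
    by (rule invertible_matrix_mapping[OF independent_if_rank_sum_outer(2)[OF finite_lessThan r]
          independent_if_rank_sum_outer(2)[OF finite_lessThan r']])
  then show ?thesis
    using that w w' by (simp add: hermitian_outer_congruence)
qed

theorem her_geodesic_transitive: "geodesic_transitive (her_verts \<sigma> :: ('a^'n^'n) set) her_adj"
proof -
  interpret rank_distance_graph "her_verts \<sigma> :: ('a^'n^'n) set" rank 1
  proof
    fix X :: "'a^'n^'n" assume "X \<in> her_verts \<sigma>" "X \<noteq> 0"
    then obtain w where "rank (X - outer (map_vec \<sigma> w) w) + 1 \<le> rank X"
      by (auto intro: hermitian_reduction simp: Suc_le_eq)
    then show "\<exists>D\<in>her_verts \<sigma>. rank D \<le> 1 \<and> rank (X - D) + 1 \<le> rank X"
      using hermitian_outer rank_outer_le by blast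
  qed (auto simp: her_verts_zero her_verts_diff rank_eq_0_gen rank_uminus rank_add_le)
  have "her_adj = (\<lambda>X Y :: 'a^'n^'n. rank (X - Y) = 1)"
    by (simp add: fun_eq_iff her_adj_def)
  moreover have "geodesic_transitive (her_verts \<sigma> :: ('a^'n^'n) set) (\<lambda>X Y. rank (X - Y) = 1)"
  proof (rule geodesic_transitiveI)
    fix l and d d' :: "nat \<Rightarrow> 'a^'n^'n"
    assume "\<forall>j<l. d j \<in> her_verts \<sigma> \<and> rank (d j) = 1" "\<forall>j<l. d' j \<in> her_verts \<sigma> \<and> rank (d' j) = 1"
      "rank (\<Sum>j<l. d j) = 1 * l" "rank (\<Sum>j<l. d' j) = 1 * l"
    then obtain Q where Q: "invertible Q" "\<forall>j<l. map_mat \<sigma> Q ** d j ** transpose Q = d' j"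
      by (rule hermitian_families_congruent)
    obtain Q' where "Q' ** Q = mat 1"
      using Q(1) invertible_left_inverse by metis
    moreover have "map_mat \<sigma> (mat 1) = mat 1"
      by (simp add: map_mat_def mat_def vec_eq_iff)
    ultimately show "\<exists>L. Modules.additive L \<and> bij_betw L (her_verts \<sigma>) (her_verts \<sigma>)
        \<and> (\<forall>X\<in>her_verts \<sigma>. rank (L X) = rank X) \<and> (\<forall>j<l. L (d j) = d' j)"
      using Q(2) her_verts_congruence
      by (intro congruence_isometry[where A' = "map_mat \<sigma> Q'" and B' = "transpose Q'"])
        (simp_all add: matrix_transpose_mul[symmetric] flip: map_mat_mult)
  qed
  ultimately show ?thesis
    by simp
qed

end

theorem proposition3p8:
  shows "(CARD('m::finite) \<le> CARD('k::finite) \<longrightarrow>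
           geodesic_transitive (UNIV :: ('a::{field,finite}^'k^'m) set) bil_adj)
       \<and> geodesic_transitive (alt_verts :: ('b::{field,finite}^'n::finite^'n) set) alt_adj
       \<and> (\<forall>(r::nat) (\<sigma>::'c::{field,finite} \<Rightarrow> 'c). CARD('c) = r ^ 2 \<and> field_automorphism \<sigma> \<and>
            \<sigma> \<circ> \<sigma> = id \<and> \<sigma> \<noteq> id \<longrightarrow>
            geodesic_transitive (her_verts \<sigma> :: ('c^'p::finite^'p) set) her_adj)"
proof (intro conjI impI allI)
  show "geodesic_transitive (UNIV :: ('a^'k^'m) set) bil_adj"
    by (rule bil_geodesic_transitive)
  show "geodesic_transitive (alt_verts :: ('b^'n^'n) set) alt_adj"
    by (rule alt_geodesic_transitive)
  fix r :: nat and \<sigma> :: "'c \<Rightarrow> 'c"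
  assume "CARD('c) = r ^ 2 \<and> field_automorphism \<sigma> \<and> \<sigma> \<circ> \<sigma> = id \<and> \<sigma> \<noteq> id"
  then interpret finite_field_involution \<sigma>
    by unfold_locales auto
  show "geodesic_transitive (her_verts \<sigma> :: ('c^'p^'p) set) her_adj"
    by (rule her_geodesic_transitive)
qed

end
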